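(* Assume $a^2\rho(\mathbf P_1\mathbf E)<1$. For every $\theta\in\mathbb N$, every reception index $j$, every $\gamma_{S_j}\in\{1,\dots,n\}$ and every value $x_{S_j}\in\mathbb R$, the performance-evaluation function satisfies $\mathcal J_{S_j}^\theta\le\mathcal R_j(\theta)$, where $$\mathcal R_j(\theta):=\big[\tilde g_\theta(\bar a^2,\gamma_{S_j})-\tilde g_\theta(c^2,\gamma_{S_j})\big]\frac{B}{c^{2\theta}}+\bar M\big[\tilde g_\theta(a^2,\gamma_{S_j})-\tilde g_\theta(1,\gamma_{S_j})\big],$$ with $\tilde g_\theta(b,\gamma):=b^\theta\,\mathbf d^T(\mathbf I-b\mathbf P_1\mathbf E)^{-1}\mathbf P_0^{\theta-1}\mathbf P_1\boldsymbol\delta_\gamma$.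
   Context: Setup. Fix reals $a,L$ with $|a|>1$ and $\bar a:=a+L$ satisfying $0<\bar a^2<1$; fix $c$ with $\bar a^2<c^2<1$, $M>0$, $B>0$, and $\bar M:=M/(a^2-1)$. Plant $x_{k+1}=ax_k+u_k+v_k$, $v_k$ i.i.d., mean $0$, variance $M$, independent of everything else. Sensor decisions $t_k\in\{0,1\}$, receptions $r_k\in\{0,1\}$ ($r_k=0$ if $t_k=0$). Controller $u_k=L\hat x_k^+$, $\hat x_k:=\bar a\hat x_{k-1}^+$, $\hat x_k^+:=x_k$ if $r_k=1$, else $\hat x_k$. Channel state $\gamma_k\in\{1,\dots,n\}$ with $\Pr[\gamma_{k+1}=i\mid\gamma_k=j,t_k=\ell]=(\mathbf P_\ell)_{ij}$, $\mathbf P_0,\mathbf P_1$ column-stochastic; drop probabilities $\mathbf e\in[0,1]^n$ (if $t_k=1$, $r_k=1$ w.p. $1-e_{\gamma_k}$); $\mathbf E:=\mathrm{diag}(\mathbf e)$, $\mathbf d:=\mathbf 1-\mathbf e$, $\mathbf P^0:=\mathbf I$, $\boldsymbol\delta_i$ standard basis vectors, $\rho$ spectral radius. $r_0=1$; $R_k:=\max\{i<k:r_i=1\}$; $S_0:=0$, $S_{j+1}:=\min\{k>S_j:r_k=1\}$. $I_k^+$ denotes the sensor's post-transmission information at time $k$, which at a reception time $S_j$ consists of $x_{S_j}$, $z^+_{S_j}=0$, $S_j$ and $\gamma_{S_j}$. Performance function $h_k:=x_k^2-\max\{c^{2(k-R_k)}x_{R_k}^2,B\}$. Nominal policy $\mathcal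 T_k^D$: $t_i=0$ for $k\le i\le k+D-1$, $t_i=1$ for $i\ge k+D$. Performance-evaluation function: $\mathcal J_{S_j}^\theta:=\mathbb E_{\mathcal T^{\theta-1}_{S_j+1}}[h_{S_{j+1}}\mid I_{S_j}^+]=\sum_{w\ge\theta}H(w,x_{S_j}^2)\,\mathbf d^T(\mathbf P_1\mathbf E)^{w-\theta}\mathbf P_0^{\theta-1}\mathbf P_1\boldsymbol\delta_{\gamma_{S_j}}$, where $H(w,y):=\bar a^{2w}y+\bar M(a^{2w}-1)-\max\{c^{2w}y,B\}$. *)

theory Defs
  imports Complex_Main "Jordan_Normal_Form.Spectral_Radius" "Jordan_Normal_Form.Gauss_Jordan_Elimination"
begin

text \<open>Channel states are indexed 0..<n (paper: 1..n). Matrices are JNF matrices.\<close>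

definition col_stochastic :: "nat \<Rightarrow> real mat \<Rightarrow> bool" where
  "col_stochastic n P \<longleftrightarrow> P \<in> carrier_mat n n \<and>
     (\<forall>i<n. \<forall>j<n. 0 \<le> P $$ (i,j)) \<and> (\<forall>j<n. (\<Sum>i<n. P $$ (i,j)) = 1)"

definition Emat :: "nat \<Rightarrow> real vec \<Rightarrow> real mat" where
  "Emat n e = mat n n (\<lambda>(i,j). if i = j then e $ i else 0)"

definition dvec :: "nat \<Rightarrow> real vec \<Rightarrow> real vec" where
  "dvec n e = vec n (\<lambda>i. 1 - e $ i)"

text \<open>H(w,y) = abar^(2w) y + Mbar (a^(2w) - 1) - max(c^(2w) y, B), with abar = a + L, Mbar = M/(a^2-1).\<close>
definition Hfun :: "real \<Rightarrow> real \<Rightarrow> real \<Rightarrow> real \<Rightarrow> real \<Rightarrow> nat \<Rightarrow> real \<Rightarrow> real" where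
  "Hfun a L c M B w y = (a + L) ^ (2*w) * y + (M / (a^2 - 1)) * (a ^ (2*w) - 1) - max (c ^ (2*w) * y) B"

text \<open>Performance-evaluation function J^theta_{S_j} as an explicit function of
  x = x_{S_j} and g = gamma_{S_j}:
  sum_{w >= theta} H(w, x^2) d^T (P1 E)^(w-theta) P0^(theta-1) P1 delta_g.\<close>
definition Jfun :: "real \<Rightarrow> real \<Rightarrow> real \<Rightarrow> real \<Rightarrow> real \<Rightarrow> nat \<Rightarrow> real mat \<Rightarrow> real mat \<Rightarrow> real vec
                    \<Rightarrow> nat \<Rightarrow> real \<Rightarrow> nat \<Rightarrow> real" where
  "Jfun a L c M B n P0 P1 e \<theta> x g =
     (\<Sum>k. Hfun a L c M B (\<theta> + k) (x^2) *
        scalar_prod (dvec n e) (((P1 * Emat n e) ^\<^sub>m k * (P0 ^\<^sub>m (\<theta> - 1)) * P1) *\<^sub>v unit_vec n g))"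

definition gtil :: "nat \<Rightarrow> real mat \<Rightarrow> real mat \<Rightarrow> real vec \<Rightarrow> nat \<Rightarrow> real \<Rightarrow> nat \<Rightarrow> real" where
  "gtil n P0 P1 e \<theta> b g =
     b ^ \<theta> * scalar_prod (dvec n e)
        ((the (mat_inverse (1\<^sub>m n - b \<cdot>\<^sub>m (P1 * Emat n e))) * (P0 ^\<^sub>m (\<theta> - 1)) * P1) *\<^sub>v unit_vec n g)"

definition Rfun :: "real \<Rightarrow> real \<Rightarrow> real \<Rightarrow> real \<Rightarrow> real \<Rightarrow> nat \<Rightarrow> real mat \<Rightarrow> real mat \<Rightarrow> real vec
                    \<Rightarrow> nat \<Rightarrow> nat \<Rightarrow> real" where
  "Rfun a L c M B n P0 P1 e \<theta> g =
     (gtil n P0 P1 e \<theta> ((a+L)^2) g - gtil n P0 P1 e \<theta> (c^2) g) * B / c ^ (2*\<theta>)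
     + (M / (a^2 - 1)) * (gtil n P0 P1 e \<theta> (a^2) g - gtil n P0 P1 e \<theta> 1 g)"

end

theory Submission
  imports Defs
begin

text \<open>Every term of the series defining J is H(theta + k, x^2) times a nonnegative weight
  w_k = d^T (P1 E)^k P0^(theta-1) P1 delta_g. Splitting according to which term attains the maximum,
  H(w, y) <= (abar^(2w) - c^(2w)) B / c^(2 theta) + Mbar (a^(2w) - 1) for all w >= theta and y >= 0.
  For 0 <= b <= a^2 the series sum_k b^(theta+k) w_k is a Neumann series for (I - b P1 E)^-1, which
  converges because rho(b P1 E) <= a^2 rho(P1 E) < 1, and its sum is g~_theta(b). Summing the termwise
  bound therefore yields exactly R_j(theta), and the lower bound H >= -(y + B) makes the series for J
  summable.\<close>

lemma smult_pow_mat: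
  assumes "(A :: 'a :: comm_ring_1 mat) \<in> carrier_mat n n"
  shows "(t \<cdot>\<^sub>m A) ^\<^sub>m k = t ^ k \<cdot>\<^sub>m A ^\<^sub>m k"
proof (induction k)
  case (Suc k)
  then show ?case
    using assms by (auto intro!: eq_matI simp: scalar_prod_def sum_distrib_left ac_simps)
qed (use assms in \<open>auto intro!: eq_matI\<close>)

lemma pow_mat_Suc_left:
  assumes "(A :: 'a :: semiring_1 mat) \<in> carrier_mat n n"
  shows "A ^\<^sub>m Suc k = A * A ^\<^sub>m k"
proof (induction k)
  case (Suc k)
  have "A ^\<^sub>m Suc (Suc k) = (A * A ^\<^sub>m k) * A" using Suc by simp
  also have "\<dots> = A * (A ^\<^sub>m k * A)" using assms by (simp add: assoc_mult_mat[of _ n n _ n])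
  finally show ?case by simp
qed (use assms in simp)

lemma smult_mult_mat_vec:
  assumes "X \<in> carrier_mat nr nc" "v \<in> carrier_vec nc"
  shows "(k \<cdot>\<^sub>m X) *\<^sub>v v = (k :: 'a :: comm_ring_1) \<cdot>\<^sub>v (X *\<^sub>v v)"
  using assms by (intro eq_vecI) (auto simp: scalar_prod_def sum_distrib_left ac_simps)

lemma eigenvalue_smult_mat:
  assumes "A \<in> carrier_mat n n" "eigenvalue A ev"
  shows "eigenvalue (c \<cdot>\<^sub>m A) (c * (ev :: 'a :: comm_ring_1))"
proof -
  obtain v where "eigenvector A v ev" using assms(2) by (auto simp: eigenvalue_def)
  then have "eigenvector (c \<cdot>\<^sub>m A) v (c * ev)"
    using assms(1) by (auto simp: eigenvector_def smult_mult_mat_vec smult_smult_assoc)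
  then show ?thesis by (auto simp: eigenvalue_def)
qed

lemma spectral_radius_nonneg:
  assumes "A \<in> carrier_mat n n" "n > 0"
  shows "0 \<le> spectral_radius A"
  using spectral_radius_mem_max(1)[OF assms] by auto

lemma spectral_radius_smult_mat_le:
  assumes A: "A \<in> carrier_mat n n" and "n > 0"
  shows "spectral_radius (c \<cdot>\<^sub>m A) \<le> norm c * spectral_radius A"
proof -
  have cA: "c \<cdot>\<^sub>m A \<in> carrier_mat n n" using A by simp
  obtain \<mu> where \<mu>: "eigenvalue (c \<cdot>\<^sub>m A) \<mu>" and eq: "spectral_radius (c \<cdot>\<^sub>m A) = norm \<mu>"
    using spectral_radius_mem_max(1)[OF cA \<open>n > 0\<close>] by (auto simp: spectrum_def)
  show ?thesis
  proof (cases "c = 0")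
    case True
    obtain v where v: "v \<in> carrier_vec n" "v \<noteq> 0\<^sub>v n" "(c \<cdot>\<^sub>m A) *\<^sub>v v = \<mu> \<cdot>\<^sub>v v"
      using \<mu> A by (auto simp: eigenvalue_def eigenvector_def)
    then obtain i where "i < n" "v $ i \<noteq> 0" by force
    with arg_cong[OF v(3), of "\<lambda>u. u $ i"] v(1) A True have "\<mu> = 0" by (simp add: scalar_prod_def)
    then show ?thesis using eq True by simp
  next
    case False
    have "inverse c \<cdot>\<^sub>m (c \<cdot>\<^sub>m A) = A" using A False by (auto intro!: eq_matI)
    then have "eigenvalue A (inverse c * \<mu>)" using eigenvalue_smult_mat[OF cA \<mu>] by metis
    then have "norm (inverse c * \<mu>) \<le> spectral_radius A"
      using spectral_radius_mem_max(2)[OF A \<open>n > 0\<close>] by (auto simp: spectrum_def)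
    then have "norm \<mu> \<le> norm c * spectral_radius A"
      using False by (simp add: norm_divide pos_divide_le_eq mult.commute flip: divide_inverse)
    then show ?thesis using eq by simp
  qed
qed

lemma spectral_radius_less_1_pow_mat_tendsto_zero:
  assumes A: "A \<in> carrier_mat n n" and \<rho>: "spectral_radius A < 1" and ij: "i < n" "j < n"
  shows "(\<lambda>k. (A ^\<^sub>m k) $$ (i,j)) \<longlonglongrightarrow> 0"
proof -
  have n: "n > 0" using ij by simp
  define s where "s = (spectral_radius A + 1) / 2"
  have s: "0 < s" "s < 1" "spectral_radius A < s"
    using \<rho> spectral_radius_nonneg[OF A n] by (auto simp: s_def)
  let ?B = "complex_of_real (1/s) \<cdot>\<^sub>m A"
  have "spectral_radius ?B \<le> (1/s) * spectral_radius A"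
    using spectral_radius_smult_mat_le[OF A n, of "complex_of_real (1/s)"] s
    by (simp add: norm_divide)
  also have "\<dots> < 1" using s by (simp add: field_simps)
  finally obtain C where C: "\<And>k. norm_bound (?B ^\<^sub>m k) C"
    using spectral_radius_jnf_norm_bound_less_1_upper_triangular[of ?B n] A by auto
  show ?thesis
  proof (rule tendsto_0_le)
    show "(\<lambda>k. s ^ k) \<longlonglongrightarrow> 0" using s by (intro LIMSEQ_power_zero) auto
    show "\<forall>\<^sub>F k in sequentially. norm ((A ^\<^sub>m k) $$ (i,j)) \<le> norm (s ^ k) * C"
    proof (intro always_eventually allI)
      fix k
      have "?B ^\<^sub>m k \<in> carrier_mat n n" using A by simp
      then have "norm ((?B ^\<^sub>m k) $$ (i,j)) \<le> C"
        using C[of k] ij unfolding norm_bound_def by (metis carrier_matD)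
      moreover have "norm ((?B ^\<^sub>m k) $$ (i,j)) = (1/s) ^ k * norm ((A ^\<^sub>m k) $$ (i,j))"
        using A ij s by (simp add: smult_pow_mat norm_mult norm_power norm_divide)
      ultimately have "(1/s) ^ k * norm ((A ^\<^sub>m k) $$ (i,j)) \<le> C" by simp
      then show "norm ((A ^\<^sub>m k) $$ (i,j)) \<le> norm (s ^ k) * C"
        using s by (simp add: power_one_over field_simps)
    qed
  qed
qed

lemma real_spectral_radius_less_1_pow_mat_tendsto_zero:
  fixes A :: "real mat"
  assumes A: "A \<in> carrier_mat n n" and "spectral_radius (map_mat complex_of_real A) < 1"
    and ij: "i < n" "j < n"
  shows "(\<lambda>k. (A ^\<^sub>m k) $$ (i,j)) \<longlonglongrightarrow> 0"
proof -
  have "(\<lambda>k. (map_mat complex_of_real A ^\<^sub>m k) $$ (i,j)) \<longlonglongrightarrow> 0"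
    using assms by (intro spectral_radius_less_1_pow_mat_tendsto_zero) auto
  then have "(\<lambda>k. complex_of_real ((A ^\<^sub>m k) $$ (i,j))) \<longlonglongrightarrow> 0"
    using A ij by (simp flip: of_real_hom.mat_hom_pow)
  then have "(\<lambda>k. norm (complex_of_real ((A ^\<^sub>m k) $$ (i,j)))) \<longlonglongrightarrow> 0"
    by (rule tendsto_norm_zero)
  then show ?thesis by (simp add: tendsto_rabs_zero_iff)
qed

lemma tendsto_scalar_prod_zero:
  fixes u :: "nat \<Rightarrow> real vec"
  assumes "\<And>k. u k \<in> carrier_vec n" and "\<And>j. j < n \<Longrightarrow> (\<lambda>k. u k $ j) \<longlonglongrightarrow> 0"
  shows "(\<lambda>k. d \<bullet> u k) \<longlonglongrightarrow> 0"
proof -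
  have "(\<lambda>k. \<Sum>j<n. d $ j * u k $ j) \<longlonglongrightarrow> (\<Sum>j<n. d $ j * 0)"
    by (intro tendsto_sum tendsto_mult tendsto_const assms(2)) auto
  moreover have "d \<bullet> u k = (\<Sum>j<n. d $ j * u k $ j)" for k
    using assms(1)[of k] by (simp add: scalar_prod_def atLeast0LessThan)
  ultimately show ?thesis by simp
qed

lemma spectral_radius_less_1_mat_inverse_one_minus:
  fixes B :: "real mat"
  assumes B: "B \<in> carrier_mat n n" and \<rho>: "spectral_radius (map_mat complex_of_real B) < 1"
  obtains Bi where "mat_inverse (1\<^sub>m n - B) = Some Bi"
proof -
  have IB: "1\<^sub>m n - B \<in> carrier_mat n n" using B by (intro minus_carrier_mat) auto
  have "det (1\<^sub>m n - B) \<noteq> 0"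
  proof
    assume "det (1\<^sub>m n - B) = 0"
    then obtain v where v: "v \<in> carrier_vec n" "v \<noteq> 0\<^sub>v n" "(1\<^sub>m n - B) *\<^sub>v v = 0\<^sub>v n"
      using det_0_iff_vec_prod_zero[OF IB] by auto
    have "B *\<^sub>v v = 1 \<cdot>\<^sub>v v"
    proof (rule eq_vecI)
      fix i assume "i < dim_vec (1 \<cdot>\<^sub>v v)"
      then have i: "i < n" using v by simp
      have "(1\<^sub>m n - B) *\<^sub>v v = v - B *\<^sub>v v"
        using minus_mult_distrib_mat_vec[OF one_carrier_mat B v(1)] v(1) by simp
      then have "(v - B *\<^sub>v v) $ i = 0" using arg_cong[OF v(3), of "\<lambda>u. u $ i"] i by simp
      then show "(B *\<^sub>v v) $ i = (1 \<cdot>\<^sub>v v) $ i" using B v(1) i by simp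
    qed (use B v in simp)
    then have "eigenvalue B 1" using B v by (auto simp: eigenvalue_def eigenvector_def)
    then have "eigenvalue (map_mat complex_of_real B) 1"
      using of_real_hom.eigenvalue_hom[OF B, of 1] by simp
    moreover have "n > 0" using v by (cases n) auto
    ultimately have "1 \<le> spectral_radius (map_mat complex_of_real B)"
      using spectral_radius_mem_max(2)[of _ n] B by (force simp: spectrum_def)
    with \<rho> show False by simp
  qed
  then have "1\<^sub>m n - B \<in> Units (ring_mat TYPE(real) n ())" by (rule det_non_zero_imp_unit[OF IB])
  then show ?thesis
    using mat_inverse(1)[OF IB, where b = "()"] that by (cases "mat_inverse (1\<^sub>m n - B)") auto
qed

lemma neumann_series_scalar_prod_sums:
  fixes B :: "real mat"
  assumes B: "B \<in> carrier_mat n n" and \<rho>: "spectral_radius (map_mat complex_of_real B) < 1"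
    and d: "d \<in> carrier_vec n" and w: "w \<in> carrier_vec n"
  shows "(\<lambda>k. d \<bullet> (B ^\<^sub>m k *\<^sub>v w)) sums (d \<bullet> (the (mat_inverse (1\<^sub>m n - B)) *\<^sub>v w))"
proof -
  obtain Bi where Bi: "mat_inverse (1\<^sub>m n - B) = Some Bi"
    using spectral_radius_less_1_mat_inverse_one_minus[OF B \<rho>] .
  have IB: "1\<^sub>m n - B \<in> carrier_mat n n" using B by (intro minus_carrier_mat) auto
  from mat_inverse(2)[OF IB Bi]
  have BiIB: "Bi * (1\<^sub>m n - B) = 1\<^sub>m n" and Bi_carrier: "Bi \<in> carrier_mat n n" by auto
  define u where "u k = B ^\<^sub>m k *\<^sub>v w" for k
  have u: "u k \<in> carrier_vec n" for k
    unfolding u_def using pow_carrier_mat[OF B] w by (rule mult_mat_vec_carrier)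
  have u_Suc: "u (Suc k) = B *\<^sub>v u k" for k
    unfolding u_def pow_mat_Suc_left[OF B] using B w by (simp add: assoc_mult_mat_vec[of _ n n _ n])
  define f where "f k = d \<bullet> (Bi *\<^sub>v u k)" for k
  have telescope: "f k - f (Suc k) = d \<bullet> u k" for k
  proof -
    have "u k - u (Suc k) = (1\<^sub>m n - B) *\<^sub>v u k"
      using minus_mult_distrib_mat_vec[OF one_carrier_mat B u] u by (simp add: u_Suc)
    then have "Bi *\<^sub>v u k - Bi *\<^sub>v u (Suc k) = u k"
      using Bi_carrier IB u BiIB assoc_mult_mat_vec[OF Bi_carrier IB u, symmetric]
      by (simp flip: mult_minus_distrib_mat_vec[OF Bi_carrier u u])
    then show ?thesis
      unfolding f_def using scalar_prod_minus_distrib[OF d] Bi_carrier u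
      by (metis mult_mat_vec_carrier)
  qed
  have u_lim: "(\<lambda>k. u k $ i) \<longlonglongrightarrow> 0" if "i < n" for i
  proof -
    have "(\<lambda>k. w \<bullet> row (B ^\<^sub>m k) i) \<longlonglongrightarrow> 0"
      using B that
      by (intro tendsto_scalar_prod_zero[where n = n])
        (auto intro: real_spectral_radius_less_1_pow_mat_tendsto_zero[OF B \<rho>])
    then show ?thesis using B w that by (simp add: u_def comm_scalar_prod[of _ n])
  qed
  have "(\<lambda>k. (Bi *\<^sub>v u k) $ i) \<longlonglongrightarrow> 0" if "i < n" for i
    using tendsto_scalar_prod_zero[OF u u_lim, of "row Bi i"] Bi_carrier that by simp
  then have "f \<longlonglongrightarrow> 0"
    unfolding f_def using Bi_carrier u by (intro tendsto_scalar_prod_zero[where n = n]) auto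
  from telescope_sums'[OF this] show ?thesis
    using telescope Bi B w by (simp add: f_def u_def)
qed

definition nonneg_mat :: "'a :: linordered_idom mat \<Rightarrow> bool" where
  "nonneg_mat A \<longleftrightarrow> (\<forall>i<dim_row A. \<forall>j<dim_col A. 0 \<le> A $$ (i,j))"

definition nonneg_vec :: "'a :: linordered_idom vec \<Rightarrow> bool" where
  "nonneg_vec v \<longleftrightarrow> (\<forall>i<dim_vec v. 0 \<le> v $ i)"

lemma nonneg_mat_mult:
  assumes "nonneg_mat A" "nonneg_mat B" "dim_col A = dim_row B"
  shows "nonneg_mat (A * B)"
  using assms by (auto simp: nonneg_mat_def scalar_prod_def intro!: sum_nonneg)

lemma nonneg_mat_pow:
  assumes "A \<in> carrier_mat n n" "nonneg_mat A"
  shows "nonneg_mat (A ^\<^sub>m k)"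
proof (induction k)
  case 0
  show ?case by (auto simp: nonneg_mat_def one_mat_def)
next
  case (Suc k)
  then show ?case using assms by (simp add: nonneg_mat_mult)
qed

lemma nonneg_mult_mat_vec:
  assumes "nonneg_mat A" "nonneg_vec v" "dim_col A = dim_vec v"
  shows "nonneg_vec (A *\<^sub>v v)"
  using assms by (auto simp: nonneg_mat_def nonneg_vec_def scalar_prod_def intro!: sum_nonneg)

lemma nonneg_scalar_prod:
  assumes "nonneg_vec v" "nonneg_vec w" "dim_vec v = dim_vec w"
  shows "0 \<le> v \<bullet> w"
  using assms by (auto simp: nonneg_vec_def scalar_prod_def intro!: sum_nonneg)

lemma summable_suminf_le_between:
  fixes f g h :: "nat \<Rightarrow> real"
  assumes "\<And>k. h k \<le> f k" "\<And>k. f k \<le> g k" "summable h" "g sums s"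
  shows "summable f" "suminf f \<le> s"
proof -
  have "summable (\<lambda>k. g k - h k)"
    using assms(3,4) by (intro summable_diff) (auto simp: sums_summable)
  then have "summable (\<lambda>k. f k - h k)"
    by (rule summable_comparison_test') (use assms(1,2) in \<open>auto intro: order.trans\<close>)
  then show "summable f" using summable_add[OF _ assms(3)] by fastforce
  then have "suminf f \<le> suminf g" using assms(2,4) by (intro suminf_le) (auto simp: sums_summable)
  then show "suminf f \<le> s" using sums_unique[OF assms(4)] by simp
qed

lemma mult_sub_max_le:
  fixes p q q0 B y :: real
  assumes "0 \<le> p" "p \<le> q" "0 < q" "q \<le> q0" "0 < B" "0 \<le> y"
  shows "p * y - max (q * y) B \<le> (p - q) * B / q0"
proof -
  have "(p - q) * (B / q) \<le> (p - q) * (B / q0)"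
    using assms by (intro mult_left_mono_neg divide_left_mono) auto
  moreover have "p * y - max (q * y) B \<le> (p - q) * (B / q)"
  proof (cases "q * y \<ge> B")
    case True
    then have "B / q \<le> y" using assms by (simp add: divide_le_eq mult.commute)
    then have "(p - q) * y \<le> (p - q) * (B / q)" using assms by (intro mult_left_mono_neg) auto
    then show ?thesis using True by (simp add: algebra_simps)
  next
    case False
    then have "y \<le> B / q" using assms by (simp add: le_divide_eq mult.commute)
    then have "p * y \<le> p * (B / q)" using assms by (intro mult_left_mono) auto
    moreover have "p * (B / q) - B = (p - q) * (B / q)" using assms by (simp add: field_simps)
    ultimately show ?thesis using False by simp
  qed
  ultimately show ?thesis by simp
qed

definition Hmajorant ::
    "real \<Rightarrow> real \<Rightarrow> real \<Rightarrow> real \<Rightarrow> real \<Rightarrow> nat \<Rightarrow> nat \<Rightarrow> real" where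
  "Hmajorant a L c M B \<theta> w =
     ((a + L) ^ (2*w) - c ^ (2*w)) * B / c ^ (2*\<theta>) + (M / (a^2 - 1)) * (a ^ (2*w) - 1)"

lemma Hfun_le_Hmajorant:
  assumes "(a + L)^2 \<le> c^2" "0 < c^2" "c^2 \<le> 1" "0 < B" "0 \<le> y" "\<theta> \<le> w"
  shows "Hfun a L c M B w y \<le> Hmajorant a L c M B \<theta> w"
proof -
  have "((a + L)^2)^w * y - max ((c^2)^w * y) B \<le> (((a + L)^2)^w - (c^2)^w) * B / (c^2)^\<theta>"
    using assms power_mono[OF assms(1), of w] power_decreasing[OF assms(6), of "c^2"]
    by (intro mult_sub_max_le) auto
  then show ?thesis by (simp add: Hfun_def Hmajorant_def power_mult)
qed

lemma Hfun_lower_bound: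
  assumes "1 < a^2" "0 \<le> M" "c^2 \<le> 1" "0 \<le> B" "0 \<le> y"
  shows "- (y + B) \<le> Hfun a L c M B w y"
proof -
  have "0 \<le> ((a + L)^2)^w * y" using assms by simp
  moreover have "0 \<le> M / (a^2 - 1) * ((a^2)^w - 1)"
    using assms by (intro mult_nonneg_nonneg divide_nonneg_pos) (auto simp: one_le_power)
  moreover have "(c^2)^w * y \<le> y" using assms by (simp add: mult_left_le_one_le power_le_one)
  then have "max ((c^2)^w * y) B \<le> y + B" using assms by simp
  ultimately show ?thesis unfolding Hfun_def power_mult by linarith
qed

text \<open>The weight d^T (P1 E)^k P0^(theta-1) P1 delta_g of H(theta + k, x_(S_j)^2) in J: the probability,
  under the nominal policy, that the next reception happens exactly at S_j + theta + k.\<close>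

definition reception_weight ::
    "nat \<Rightarrow> real mat \<Rightarrow> real mat \<Rightarrow> real vec \<Rightarrow> nat \<Rightarrow> nat \<Rightarrow> nat \<Rightarrow> real" where
  "reception_weight n P0 P1 e \<theta> g k =
     dvec n e \<bullet> (((P1 * Emat n e) ^\<^sub>m k * P0 ^\<^sub>m (\<theta> - 1) * P1) *\<^sub>v unit_vec n g)"

lemma reception_weight_nonneg:
  assumes "col_stochastic n P0" "col_stochastic n P1" "\<forall>i<n. 0 \<le> e $ i \<and> e $ i \<le> 1"
  shows "0 \<le> reception_weight n P0 P1 e \<theta> g k"
proof -
  have P: "P0 \<in> carrier_mat n n" "P1 \<in> carrier_mat n n" "nonneg_mat P0" "nonneg_mat P1"
    using assms(1,2) by (auto simp: col_stochastic_def nonneg_mat_def)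
  have E: "Emat n e \<in> carrier_mat n n" "nonneg_mat (Emat n e)"
    using assms(3) by (auto simp: Emat_def nonneg_mat_def)
  have "nonneg_mat ((P1 * Emat n e) ^\<^sub>m k * P0 ^\<^sub>m (\<theta> - 1) * P1)"
    using P E by (intro nonneg_mat_mult nonneg_mat_pow[where n = n]) auto
  moreover have "nonneg_vec (unit_vec n g)" "nonneg_vec (dvec n e)"
    using assms(3) by (auto simp: nonneg_vec_def unit_vec_def dvec_def)
  ultimately show ?thesis
    unfolding reception_weight_def using P E
    by (intro nonneg_scalar_prod nonneg_mult_mat_vec) (auto simp: dvec_def)
qed

lemma gtil_sums:
  assumes P: "P0 \<in> carrier_mat n n" "P1 \<in> carrier_mat n n" and "n > 0"
    and b: "0 \<le> b" "b * spectral_radius (map_mat complex_of_real (P1 * Emat n e)) < 1"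
  shows "(\<lambda>k. b ^ (\<theta> + k) * reception_weight n P0 P1 e \<theta> g k) sums gtil n P0 P1 e \<theta> b g"
proof -
  define A where "A = P1 * Emat n e"
  define Q where "Q = P0 ^\<^sub>m (\<theta> - 1) * P1"
  define w where "w = Q *\<^sub>v unit_vec n g"
  have A: "A \<in> carrier_mat n n" using P by (simp add: A_def Emat_def)
  have Q: "Q \<in> carrier_mat n n"
    unfolding Q_def using pow_carrier_mat[OF P(1)] P(2) by (rule mult_carrier_mat)
  have w: "w \<in> carrier_vec n" using Q by (simp add: w_def)
  have d: "dvec n e \<in> carrier_vec n" by (simp add: dvec_def)
  have "spectral_radius (map_mat complex_of_real (b \<cdot>\<^sub>m A))
      = spectral_radius (complex_of_real b \<cdot>\<^sub>m map_mat complex_of_real A)"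
    by (rule arg_cong[where f = spectral_radius]) (auto intro!: eq_matI)
  also have "\<dots> \<le> b * spectral_radius (map_mat complex_of_real A)"
    using spectral_radius_smult_mat_le[of "map_mat complex_of_real A" n "complex_of_real b"]
      A \<open>n > 0\<close> b(1) by simp
  finally have \<rho>: "spectral_radius (map_mat complex_of_real (b \<cdot>\<^sub>m A)) < 1"
    using b(2) by (simp add: A_def)
  have "(\<lambda>k. dvec n e \<bullet> ((b \<cdot>\<^sub>m A) ^\<^sub>m k *\<^sub>v w))
      sums (dvec n e \<bullet> (the (mat_inverse (1\<^sub>m n - b \<cdot>\<^sub>m A)) *\<^sub>v w))"
    using A w d \<rho> by (intro neumann_series_scalar_prod_sums[where n = n]) auto
  moreover have "dvec n e \<bullet> ((b \<cdot>\<^sub>m A) ^\<^sub>m k *\<^sub>v w) = b ^ k * reception_weight n P0 P1 e \<theta> g k" for k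
  proof -
    have "(b \<cdot>\<^sub>m A) ^\<^sub>m k *\<^sub>v w = b ^ k \<cdot>\<^sub>v (A ^\<^sub>m k *\<^sub>v w)"
      using A w by (simp add: smult_pow_mat smult_mult_mat_vec[of _ n n])
    moreover have "A ^\<^sub>m k *\<^sub>v w = (A ^\<^sub>m k * P0 ^\<^sub>m (\<theta> - 1) * P1) *\<^sub>v unit_vec n g"
      using assoc_mult_mat_vec[OF pow_carrier_mat[OF A] Q unit_vec_carrier]
        assoc_mult_mat[OF pow_carrier_mat[OF A] pow_carrier_mat[OF P(1)] P(2)]
      by (simp add: w_def Q_def)
    ultimately show ?thesis using A P d by (simp add: reception_weight_def A_def)
  qed
  moreover have
    "b ^ \<theta> * (dvec n e \<bullet> (the (mat_inverse (1\<^sub>m n - b \<cdot>\<^sub>m A)) *\<^sub>v w)) = gtil n P0 P1 e \<theta> b g"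
  proof -
    have bA: "b \<cdot>\<^sub>m A \<in> carrier_mat n n" using A by simp
    obtain Bi where "mat_inverse (1\<^sub>m n - b \<cdot>\<^sub>m A) = Some Bi"
      using spectral_radius_less_1_mat_inverse_one_minus[OF bA \<rho>] .
    moreover have "1\<^sub>m n - b \<cdot>\<^sub>m A \<in> carrier_mat n n" using bA by (intro minus_carrier_mat) auto
    ultimately have "Bi \<in> carrier_mat n n" using mat_inverse(2) by blast
    then show ?thesis
      using \<open>mat_inverse _ = Some Bi\<close> assoc_mult_mat_vec[OF _ Q unit_vec_carrier, of Bi n]
        assoc_mult_mat[OF _ pow_carrier_mat[OF P(1)] P(2), of Bi n]
      by (simp add: gtil_def A_def w_def Q_def)
  qed
  ultimately show ?thesis by (auto simp: power_add mult.assoc dest: sums_mult[where c = "b ^ \<theta>"])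
qed

lemma Hmajorant_series_sums_Rfun:
  fixes \<omega> :: "nat \<Rightarrow> real"
  assumes gs: "\<And>b. 0 \<le> b \<Longrightarrow> b \<le> a^2 \<Longrightarrow> (\<lambda>k. b ^ (\<theta> + k) * \<omega> k) sums gtil n P0 P1 e \<theta> b g"
    and "(a + L)^2 \<le> a^2" "c^2 \<le> a^2" "1 \<le> a^2"
  shows "(\<lambda>k. Hmajorant a L c M B \<theta> (\<theta> + k) * \<omega> k) sums Rfun a L c M B n P0 P1 e \<theta> g"
proof -
  let ?G = "\<lambda>b. gtil n P0 P1 e \<theta> b g" and ?S = "\<lambda>b k. b ^ (\<theta> + k) * \<omega> k"
  let ?\<beta> = "B / (c^2)^\<theta>" and ?Mbar = "M / (a^2 - 1)"
  have "(\<lambda>k. (?S ((a + L)^2) k - ?S (c^2) k) * ?\<beta> + ?Mbar * (?S (a^2) k - ?S 1 k))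
      sums ((?G ((a + L)^2) - ?G (c^2)) * ?\<beta> + ?Mbar * (?G (a^2) - ?G 1))"
    using assms by (intro sums_add sums_mult2 sums_mult sums_diff gs) auto
  moreover have "Hmajorant a L c M B \<theta> (\<theta> + k) * \<omega> k
      = (?S ((a + L)^2) k - ?S (c^2) k) * ?\<beta> + ?Mbar * (?S (a^2) k - ?S 1 k)" for k
    unfolding Hmajorant_def power_mult by (simp add: algebra_simps diff_divide_distrib)
  moreover have "Rfun a L c M B n P0 P1 e \<theta> g
      = (?G ((a + L)^2) - ?G (c^2)) * ?\<beta> + ?Mbar * (?G (a^2) - ?G 1)"
    unfolding Rfun_def power_mult by simp
  ultimately show ?thesis by simp
qed

theorem mainTheorem4:
  fixes a L c M B :: real and n :: nat and P0 P1 :: "real mat" and e :: "real vec"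
  assumes "\<bar>a\<bar> > 1"
    and "0 < (a + L)^2" and "(a + L)^2 < 1"
    and "(a + L)^2 < c^2" and "c^2 < 1"
    and "M > 0" and "B > 0"
    and "n \<ge> 1"
    and "col_stochastic n P0" and "col_stochastic n P1"
    and "e \<in> carrier_vec n" and "\<forall>i<n. 0 \<le> e $ i \<and> e $ i \<le> 1"
    and "a^2 * spectral_radius (map_mat complex_of_real (P1 * Emat n e)) < 1"
  shows "\<forall>\<theta>::nat. \<theta> \<ge> 1 \<longrightarrow> (\<forall>g<n. \<forall>x::real.
           Jfun a L c M B n P0 P1 e \<theta> x g \<le> Rfun a L c M B n P0 P1 e \<theta> g)"
proof (intro allI impI)
  fix \<theta> g :: nat and x :: real
  let ?\<omega> = "reception_weight n P0 P1 e \<theta> g"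
    and ?\<rho> = "spectral_radius (map_mat complex_of_real (P1 * Emat n e))"
  have P: "P0 \<in> carrier_mat n n" "P1 \<in> carrier_mat n n"
    using assms(9,10) by (auto simp: col_stochastic_def)
  have a2: "1 < a^2"
    using assms(1) by (metis abs_le_square_iff abs_one less_le one_power2 power2_abs not_less)
  have "0 \<le> ?\<rho>"
    using P assms(8) by (intro spectral_radius_nonneg[where n = n]) (auto simp: Emat_def)
  then have gs: "(\<lambda>k. b ^ (\<theta> + k) * ?\<omega> k) sums gtil n P0 P1 e \<theta> b g" if "0 \<le> b" "b \<le> a^2" for b
    using that assms(8,13) mult_right_mono[OF that(2), of ?\<rho>]
    by (intro gtil_sums P) auto
  have \<omega>: "0 \<le> ?\<omega> k" for k using assms(9,10,12) by (rule reception_weight_nonneg)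
  have "- (x^2 + B) * ?\<omega> k \<le> Hfun a L c M B (\<theta> + k) (x^2) * ?\<omega> k" for k
    using a2 assms(5,6,7) \<omega> by (intro mult_right_mono Hfun_lower_bound) auto
  moreover have "Hfun a L c M B (\<theta> + k) (x^2) * ?\<omega> k \<le> Hmajorant a L c M B \<theta> (\<theta> + k) * ?\<omega> k" for k
    using assms(4,5,7) \<omega> by (intro mult_right_mono Hfun_le_Hmajorant) auto
  moreover have "summable (\<lambda>k. - (x^2 + B) * ?\<omega> k)" using gs[of 1] a2 by (simp add: sums_summable)
  moreover have "(\<lambda>k. Hmajorant a L c M B \<theta> (\<theta> + k) * ?\<omega> k) sums Rfun a L c M B n P0 P1 e \<theta> g"
    using assms(3,5) a2 by (intro Hmajorant_series_sums_Rfun gs) auto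
  ultimately show "Jfun a L c M B n P0 P1 e \<theta> x g \<le> Rfun a L c M B n P0 P1 e \<theta> g"
    unfolding Jfun_def reception_weight_def[symmetric] by (rule summable_suminf_le_between(2))
qed

end
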